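(* Let $L\neq0$ and write $\ell=(L^2)^{1/3}$. For $h<-\frac32\ell$ let $u_1\in(0,\ell)$ and $u_2\in(\ell,+\infty)$ be the unique numbers with $2u_i+\frac{L^2}{u_i^2}=-2h$, and define $C_{1,\xi}(h)$ and $C_{2,\xi}(h)$ by $$\Big(u_1+\frac{2L^2}{u_1^2}\Big)u_1=2(C_{1,\xi}(h)+1),\qquad \Big(u_2+\frac{2L^2}{u_2^2}\Big)u_2=2(C_{2,\xi}(h)+1);$$ at $h=-\frac32\ell$ set $C_{1,\xi}(h)=C_{2,\xi}(h)=\frac32\ell^2-1$ (the limiting value). Then for every $h\in(-\infty,-\frac32\ell]$ one has $C_{1,\xi}(h)\le C_{2,\xi}(h)$, with equality if and only if $h=-\frac32\ell$.
   Context: Equivalently, $C_{1,\xi}(h)$ (resp. $C_{2,\xi}(h)$) is the value of $c$ for which the cubic $f(u)=u^3+2hu^2+2(c+1)u-L^2$ has a double positive root smaller (resp. larger) than its simple root. *)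

theory Defs
  imports "HOL-Analysis.Analysis"
begin

definition ellL :: "real \<Rightarrow> real" where
  "ellL L = root 3 (L^2)"

definition u1 :: "real \<Rightarrow> real \<Rightarrow> real" where
  "u1 L h = (THE u. 0 < u \<and> u < ellL L \<and> 2*u + L^2/u^2 = -2*h)"

definition u2 :: "real \<Rightarrow> real \<Rightarrow> real" where
  "u2 L h = (THE u. ellL L < u \<and> 2*u + L^2/u^2 = -2*h)"

definition C1xi :: "real \<Rightarrow> real \<Rightarrow> real" where
  "C1xi L h = (if h = -(3/2) * ellL L then (3/2) * (ellL L)^2 - 1
     else (u1 L h + 2*L^2/(u1 L h)^2) * u1 L h / 2 - 1)"

definition C2xi :: "real \<Rightarrow> real \<Rightarrow> real" where
  "C2xi L h = (if h = -(3/2) * ellL L then (3/2) * (ellL L)^2 - 1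
     else (u2 L h + 2*L^2/(u2 L h)^2) * u2 L h / 2 - 1)"

end

theory Submission
  imports Defs
begin

text \<open>With \<open>\<ell>\<^sup>3 = L\<^sup>2\<close>, the level function \<open>u \<mapsto> 2u + \<ell>\<^sup>3/u\<^sup>2\<close> takes the value \<open>3\<ell>\<close> at
  \<open>u = \<ell>\<close> and tends to infinity at \<open>0\<close> and at infinity, so every level \<open>-2h > 3\<ell>\<close> is attained
  on both sides of \<open>\<ell>\<close>. Two distinct points \<open>u, v\<close> of the same level satisfy
  \<open>2u\<^sup>2v\<^sup>2 = \<ell>\<^sup>3(u + v)\<close>; this forces them to opposite sides of \<open>\<ell>\<close>, which gives uniqueness of
  \<open>u\<^sub>1, u\<^sub>2\<close>, and it turns the difference of the values \<open>u\<^sup>2/2 + \<ell>\<^sup>3/u\<close> into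
  \<open>(v - u)((u + v)/2 - 2uv/(u + v))\<close>, which is positive by the AM--HM inequality.\<close>

lemma level_eq_imp_product_eq:
  fixes u v c :: real
  assumes "0 < u" "0 < v" "u \<noteq> v" "2 * u + c / u^2 = 2 * v + c / v^2"
  shows "2 * u^2 * v^2 = c * (u + v)"
proof -
  have "2 * u * u^2 * v^2 + c * v^2 = 2 * v * u^2 * v^2 + c * u^2"
    using assms by (simp add: field_simps)
  then have "(u - v) * (2 * u^2 * v^2 - c * (u + v)) = 0"
    by (simp add: algebra_simps power2_eq_square)
  then show ?thesis
    using assms(3) by simp
qed

lemma level_eq_imp_opposite_sides:
  fixes u v l :: real
  assumes "0 < l" "0 < u" "0 < v" "u \<noteq> v" "2 * u + l^3 / u^2 = 2 * v + l^3 / v^2"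
  shows "(u - l) * (v - l) < 0"
proof (rule ccontr)
  have product_eq: "(2 * u * v) * (u * v) = l * (u + v) * l^2"
    using level_eq_imp_product_eq[OF assms(2-5)]
    by (simp add: power2_eq_square power3_eq_cube algebra_simps)
  have gap_split: "l * (u + v) - 2 * u * v = u * (l - v) + v * (l - u)"
    by (simp add: algebra_simps)
  assume "\<not> ?thesis"
  then consider "u \<le> l" "v \<le> l" | "l \<le> u" "l \<le> v"
    by (smt (verit) mult_pos_neg mult_neg_pos)
  then show False
  proof cases
    case 1
    then have "0 \<le> u * (l - v)" "0 \<le> v * (l - u)" "0 < u * (l - v) \<or> 0 < v * (l - u)"
      using assms(2-4) by (auto simp: zero_less_mult_iff)
    then have "2 * u * v < l * (u + v)"
      using gap_split by linarith
    moreover have "u * v \<le> l^2"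
      using 1 assms(2,3) by (simp add: mult_mono power2_eq_square)
    ultimately have "(2 * u * v) * (u * v) < l * (u + v) * l^2"
      using assms(2,3) by (simp add: mult_less_le_imp_less)
    then show False
      using product_eq by simp
  next
    case 2
    then have "u * (l - v) \<le> 0" "v * (l - u) \<le> 0" "u * (l - v) < 0 \<or> v * (l - u) < 0"
      using assms(2-4) by (auto simp: mult_le_0_iff mult_less_0_iff)
    then have "l * (u + v) < 2 * u * v"
      using gap_split by linarith
    moreover have "l^2 \<le> u * v"
      using 2 assms(1) by (simp add: mult_mono power2_eq_square)
    ultimately have "l * (u + v) * l^2 < (2 * u * v) * (u * v)"
      using assms(1-3) by (simp add: mult_less_le_imp_less)
    then show False
      using product_eq by simp
  qed
qed

lemma level_attains_below:
  fixes l s :: real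
  assumes "0 < l" "3 * l < s"
  shows "\<exists>u. 0 < u \<and> u < l \<and> 2 * u + l^3 / u^2 = s"
proof -
  define g where "g u = 2 * u + l^3 / u^2" for u :: real
  define a where "a = l^2 / s"
  have "0 < s"
    using assms by simp
  then have "0 < a" "a < l"
    using assms by (simp_all add: a_def power2_eq_square field_simps)
  have "s \<le> s^2 / l"
    using assms \<open>0 < s\<close> by (simp add: power2_eq_square field_simps)
  also have "\<dots> = l^3 / a^2"
    using assms \<open>0 < s\<close> by (simp add: a_def power2_eq_square power3_eq_cube field_simps)
  finally have "s \<le> g a"
    using \<open>0 < a\<close> by (simp add: g_def)
  moreover have "g l < s"
    using assms by (simp add: g_def power2_eq_square power3_eq_cube)
  moreover have "\<forall>x. a \<le> x \<and> x \<le> l \<longrightarrow> isCont g x"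
    using \<open>0 < a\<close> unfolding g_def by (auto intro!: continuous_intros)
  ultimately obtain x where "a \<le> x" "x \<le> l" "g x = s"
    using IVT2[of g l s a] \<open>a < l\<close> by auto
  moreover have "x \<noteq> l"
    using \<open>g l < s\<close> \<open>g x = s\<close> by auto
  ultimately show ?thesis
    using \<open>0 < a\<close> unfolding g_def by (intro exI[of _ x]) auto
qed

lemma level_attains_above:
  fixes l s :: real
  assumes "0 < l" "3 * l < s"
  shows "\<exists>u. l < u \<and> 2 * u + l^3 / u^2 = s"
proof -
  define g where "g u = 2 * u + l^3 / u^2" for u :: real
  have "s \<le> g s"
    using assms by (simp add: g_def)
  moreover have "g l < s"
    using assms by (simp add: g_def power2_eq_square power3_eq_cube)
  moreover have "\<forall>x. l \<le> x \<and> x \<le> s \<longrightarrow> isCont g x"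
    using assms unfolding g_def by (auto intro!: continuous_intros)
  ultimately obtain x where "l \<le> x" "g x = s"
    using IVT[of g l s s] assms by auto
  moreover have "x \<noteq> l"
    using \<open>g l < s\<close> \<open>g x = s\<close> by auto
  ultimately show ?thesis
    unfolding g_def by (intro exI[of _ x]) auto
qed

lemma level_eq_imp_value_less:
  fixes u v c :: real
  assumes "0 < u" "u < v" "2 * u + c / u^2 = 2 * v + c / v^2"
  shows "(u + 2 * c / u^2) * u / 2 < (v + 2 * c / v^2) * v / 2"
proof -
  have "0 < v"
    using assms by simp
  have "c / (u * v) = 2 * u * v / (u + v)"
    using level_eq_imp_product_eq[of u v c] assms \<open>0 < v\<close>
    by (simp add: power2_eq_square field_simps)
  also have "\<dots> < (u + v) / 2"
  proof -
    have "0 < (v - u)^2"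
      using assms(2) by simp
    then have "4 * (u * v) < (u + v) * (u + v)"
      by (simp add: power2_eq_square algebra_simps)
    then show ?thesis
      using assms(1) \<open>0 < v\<close> by (simp add: field_simps)
  qed
  finally have "0 < (v - u) * ((u + v) / 2 - c / (u * v))"
    using assms(2) by simp
  also have "\<dots> = (v + 2 * c / v^2) * v / 2 - (u + 2 * c / u^2) * u / 2"
    using assms(1) \<open>0 < v\<close> by (simp add: power2_eq_square field_simps)
  finally show ?thesis
    by simp
qed

lemma ellL_cube: "ellL L ^ 3 = L^2"
  unfolding ellL_def by (simp add: odd_real_root_pow)

lemma ellL_pos: "L \<noteq> 0 \<Longrightarrow> 0 < ellL L"
  unfolding ellL_def by simp

lemma u1_eqI:
  assumes "0 < v" "v < ellL L" "2 * v + L^2 / v^2 = -2 * h"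
  shows "u1 L h = v"
  unfolding u1_def
proof (rule the_equality)
  fix u
  assume u: "0 < u \<and> u < ellL L \<and> 2 * u + L^2 / u^2 = -2 * h"
  show "u = v"
  proof (rule ccontr)
    assume "u \<noteq> v"
    then have "(u - ellL L) * (v - ellL L) < 0"
      using level_eq_imp_opposite_sides[of "ellL L" u v] u assms by (simp add: ellL_cube)
    then show False
      using u assms by (simp add: mult_less_0_iff)
  qed
qed (use assms in simp)

lemma u2_eqI:
  assumes "L \<noteq> 0" "ellL L < v" "2 * v + L^2 / v^2 = -2 * h"
  shows "u2 L h = v"
  unfolding u2_def
proof (rule the_equality)
  fix u
  assume u: "ellL L < u \<and> 2 * u + L^2 / u^2 = -2 * h"
  show "u = v"
  proof (rule ccontr)
    assume "u \<noteq> v"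
    moreover have "0 < ellL L"
      using assms(1) by (rule ellL_pos)
    ultimately have "(u - ellL L) * (v - ellL L) < 0"
      using level_eq_imp_opposite_sides[of "ellL L" u v] u assms by (simp add: ellL_cube)
    then show False
      using u assms by (simp add: mult_less_0_iff)
  qed
qed (use assms in simp)

theorem lemma5p1:
  fixes L h :: real
  assumes "L \<noteq> 0" and "h \<le> -(3/2) * ellL L"
  shows "C1xi L h \<le> C2xi L h \<and> (C1xi L h = C2xi L h \<longleftrightarrow> h = -(3/2) * ellL L)"
proof (cases "h = -(3/2) * ellL L")
  case True
  then show ?thesis
    by (simp add: C1xi_def C2xi_def)
next
  case False
  define l where "l = ellL L"
  have "0 < l" "3 * l < -2 * h"
    using ellL_pos[OF assms(1)] assms(2) False by (simp_all add: l_def)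
  obtain v1 where v1: "0 < v1" "v1 < l" "2 * v1 + L^2 / v1^2 = -2 * h"
    using level_attains_below[OF \<open>0 < l\<close> \<open>3 * l < -2 * h\<close>] by (auto simp: l_def ellL_cube)
  obtain v2 where v2: "l < v2" "2 * v2 + L^2 / v2^2 = -2 * h"
    using level_attains_above[OF \<open>0 < l\<close> \<open>3 * l < -2 * h\<close>] by (auto simp: l_def ellL_cube)
  have "u1 L h = v1" "u2 L h = v2"
    using u1_eqI[OF v1[unfolded l_def]] u2_eqI[OF assms(1) v2[unfolded l_def]] by simp_all
  moreover have "(v1 + 2 * L^2 / v1^2) * v1 / 2 < (v2 + 2 * L^2 / v2^2) * v2 / 2"
    using level_eq_imp_value_less[of v1 v2 "L^2"] v1 v2 by simp
  ultimately show ?thesis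
    using False by (simp add: C1xi_def C2xi_def)
qed

end
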